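(* Let $r \in \mathbb{Q}_{>0}$ be such that $S_r$ is atomic. The following are equivalent: (1) $r \in \mathbb{N}$; (2) $\rho(S_r) = 1$; (3) $\rho(S_r) < \infty$. Consequently, $\rho(S_r) \in \{1, \infty\}$.
   Context: For $q \in \mathbb{Q}_{>0}$, $\mathsf{n}(q),\mathsf{d}(q)$ are the positive coprime integers with $q = \mathsf{n}(q)/\mathsf{d}(q)$. $S_r$ is the additive submonoid of $(\mathbb{Q}_{\ge 0},+)$ generated by $\{r^n : n \in \mathbb{N}_0\}$; it is atomic exactly when $r=1$ or $\mathsf{n}(r)>1$. $\mathsf{L}(x)$ denotes the set of lengths of factorizations of $x$ into atoms. The elasticity of $x \ne 0$ is $\rho(x) = \sup \mathsf{L}(x)/\inf \mathsf{L}(x) \in \mathbb{Q}_{\ge 1} \cup \{\infty\}$, $\rho(0)=1$, and $\rho(S_r) = \sup\{\rho(x) : x \in S_r \setminus \{0\}\}$. *)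

theory Defs
  imports Complex_Main "HOL-Library.Multiset" "HOL-Library.Extended_Real"
begin

inductive_set Sr :: "rat \<Rightarrow> rat set" for r :: rat where
  zero: "0 \<in> Sr r"
| gen: "x \<in> Sr r \<Longrightarrow> x + r ^ n \<in> Sr r"

text \<open>Atoms of a (reduced) submonoid M of (Q_{\<ge>0},+): nonzero elements that are not
  a sum of two nonzero elements of M (the only unit is 0).\<close>
definition atoms :: "rat set \<Rightarrow> rat set" where
  "atoms M = {a \<in> M. a \<noteq> 0 \<and> (\<forall>b\<in>M. \<forall>c\<in>M. a = b + c \<longrightarrow> b = 0 \<or> c = 0)}"

definition factorizations :: "rat set \<Rightarrow> rat \<Rightarrow> rat multiset set" where
  "factorizations M x = {F. set_mset F \<subseteq> atoms M \<and> sum_mset F = x}"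

definition lengths :: "rat set \<Rightarrow> rat \<Rightarrow> nat set" where
  "lengths M x = size ` factorizations M x"

definition atomic_monoid :: "rat set \<Rightarrow> bool" where
  "atomic_monoid M \<longleftrightarrow> (\<forall>x\<in>M. x \<noteq> 0 \<longrightarrow> factorizations M x \<noteq> {})"

definition elasticity :: "rat set \<Rightarrow> rat \<Rightarrow> ereal" where
  "elasticity M x = (if x = 0 then 1 else
     (SUP l\<in>lengths M x. ereal (real l)) / (INF l\<in>lengths M x. ereal (real l)))"

definition monoid_elasticity :: "rat set \<Rightarrow> ereal" where
  "monoid_elasticity M = (SUP x\<in>M - {0}. elasticity M x)"

end

theory Submission
  imports Defs
begin

text \<open>If \<open>r\<close> is a positive integer, \<open>1\<close> is the only atom of \<open>S\<^sub>r\<close>, so an element \<open>x\<close> has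
  only factorizations of length \<open>x\<close> and the elasticity is \<open>1\<close>. Otherwise \<open>r = a/d\<close> with
  \<open>d > 1\<close> coprime to \<open>a\<close>; atomicity forces \<open>a > 1\<close>, since for \<open>a = 1\<close> every generator
  \<open>r\<^sup>n = (d - 1) r\<^sup>n\<^sup>+\<^sup>1 + r\<^sup>n\<^sup>+\<^sup>1\<close> splits. Then every power \<open>r\<^sup>k\<close> is an atom: the summands of a
  splitting \<open>r\<^sup>k = b + c\<close> are sums of powers \<open>r\<^sup>n\<close> all lying on one side of \<open>k\<close>, and clearing
  denominators yields \<open>d \<bar> a\<^sup>k\<close> (if \<open>r > 1\<close>) or \<open>a \<bar> d\<^sup>N\<close> (if \<open>r < 1\<close>). Hence \<open>a\<^sup>k = a\<^sup>k \<cdot> 1 = d\<^sup>k \<cdot> r\<^sup>k\<close>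
  has factorizations of lengths \<open>a\<^sup>k\<close> and \<open>d\<^sup>k\<close>, whose ratio is unbounded.\<close>

lemma Sr_nonneg: "x \<in> Sr r \<Longrightarrow> r > 0 \<Longrightarrow> x \<ge> 0"
  by (induction rule: Sr.induct) auto

lemma Sr_add: "y \<in> Sr r \<Longrightarrow> x \<in> Sr r \<Longrightarrow> x + y \<in> Sr r"
proof (induction rule: Sr.induct)
  case (gen y n)
  then show ?case using Sr.gen[of "x + y" r n] by (simp add: add.assoc)
qed simp

lemma of_nat_mult_power_in_Sr: "of_nat m * r ^ n \<in> Sr r"
proof (induction m)
  case (Suc m)
  then show ?case using Sr.gen[OF Suc, of n] by (simp add: algebra_simps)
qed (simp add: Sr.zero)

lemma power_in_Sr: "r ^ n \<in> Sr r"
  using of_nat_mult_power_in_Sr[of 1 r n] by simp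

lemma one_in_Sr: "1 \<in> Sr r"
  using power_in_Sr[of r 0] by simp

lemma Sr_subset_Nats: "r \<in> \<nat> \<Longrightarrow> Sr r \<subseteq> \<nat>"
proof
  fix x assume "x \<in> Sr r" and "r \<in> \<nat>"
  then show "x \<in> \<nat>"
    by (induction rule: Sr.induct) (auto elim!: Nats_cases simp flip: of_nat_power)
qed

lemma rat_eq_coprime_nat_fraction:
  fixes r :: rat
  assumes "r > 0"
  obtains a d :: nat where "a > 0" "d > 0" "coprime a d" "r = of_nat a / of_nat d"
proof -
  obtain a d where q: "quotient_of r = (a, d)" by (cases "quotient_of r")
  have d: "d > 0" and r: "r = of_int a / of_int d" and "coprime a d"
    using quotient_of_denom_pos[OF q] quotient_of_div[OF q] quotient_of_coprime[OF q] by auto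
  moreover have "a > 0" using assms d r by (simp add: zero_less_divide_iff)
  ultimately show ?thesis
    using that[of "nat a" "nat d"] by (simp add: coprime_int_iff[symmetric])
qed

lemma coprime_dvd_power_eq_one: "coprime a (d::nat) \<Longrightarrow> a dvd d ^ n \<Longrightarrow> a = 1"
  using coprime_absorb_left[of a "d ^ n"] by simp

lemma atoms_trivial_split: "a \<in> atoms M \<Longrightarrow> b \<in> M \<Longrightarrow> c \<in> M \<Longrightarrow> a = b + c \<Longrightarrow> b = 0 \<or> c = 0"
  by (simp add: atoms_def)

lemma lengths_ge_one: "x \<noteq> 0 \<Longrightarrow> l \<in> lengths M x \<Longrightarrow> l \<ge> 1"
  by (auto simp: lengths_def factorizations_def Suc_le_eq intro!: gr0I)

lemma elasticity_ge_length_ratio: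
  assumes x: "x \<noteq> 0" and l1: "l1 \<in> lengths M x" and l2: "l2 \<in> lengths M x"
  shows "elasticity M x \<ge> ereal (real l1 / real l2)"
proof -
  define S where "S = (SUP l\<in>lengths M x. ereal (real l))"
  define I where "I = (INF l\<in>lengths M x. ereal (real l))"
  have S_ge: "S \<ge> ereal (real l1)" unfolding S_def by (rule SUP_upper[OF l1])
  have "I \<le> ereal (real l2)" unfolding I_def by (rule INF_lower[OF l2])
  moreover have "I \<ge> 1" unfolding I_def using lengths_ge_one[OF x]
    by (intro INF_greatest) (simp add: one_ereal_def)
  ultimately obtain i where I: "I = ereal i" and "1 \<le> i" "i \<le> real l2"
    by (cases I) (auto simp: one_ereal_def)
  have "elasticity M x = S / I" using x by (simp add: elasticity_def S_def I_def)
  moreover have "ereal (real l1 / real l2) \<le> S / ereal i"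
  proof (cases S)
    case (real s)
    have "real l1 / real l2 \<le> s / real l2"
      using S_ge real by (simp add: divide_right_mono)
    also have "\<dots> \<le> s / i"
      using S_ge real \<open>1 \<le> i\<close> \<open>i \<le> real l2\<close> by (intro divide_left_mono) auto
    finally show ?thesis using real \<open>1 \<le> i\<close> by simp
  qed (use S_ge \<open>1 \<le> i\<close> in auto)
  ultimately show ?thesis using I by simp
qed

lemma monoid_elasticity_ge_length_ratio:
  assumes "x \<in> M" "x \<noteq> 0" "l1 \<in> lengths M x" "l2 \<in> lengths M x"
  shows "monoid_elasticity M \<ge> ereal (real l1 / real l2)"
proof -
  have "elasticity M x \<le> monoid_elasticity M"
    unfolding monoid_elasticity_def using assms(1,2) by (intro SUP_upper) auto
  then show ?thesis using elasticity_ge_length_ratio[OF assms(2-4)] by simp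
qed

lemma size_in_lengths: "F \<in> factorizations M x \<Longrightarrow> size F \<in> lengths M x"
  by (simp add: lengths_def)

lemma replicate_in_factorizations:
  "a \<in> atoms M \<Longrightarrow> of_nat n * a = x \<Longrightarrow> replicate_mset n a \<in> factorizations M x"
  by (simp add: factorizations_def)

lemma lengths_eq_if_atoms_subset_singleton:
  assumes atoms: "atoms M \<subseteq> {a}" and F: "F \<in> factorizations M x"
  shows "lengths M x = {size F}"
proof -
  have sum: "x = of_nat (size G) * a" if G: "G \<in> factorizations M x" for G
  proof -
    have "G = replicate_mset (size G) a"
      using G atoms by (intro set_mset_subset_singletonD) (auto simp: factorizations_def)
    then have "sum_mset G = of_nat (size G) * a" by (metis sum_mset_replicate_mset)
    then show ?thesis using G by (simp add: factorizations_def)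
  qed
  have "size G = size F" if G: "G \<in> factorizations M x" for G
  proof (cases "a \<in> atoms M")
    case True
    then have "a \<noteq> 0" by (simp add: atoms_def)
    then show ?thesis using sum[OF G] sum[OF F] by simp
  next
    case False
    then have "atoms M = {}" using atoms by blast
    then show ?thesis using G F by (simp add: factorizations_def)
  qed
  then show ?thesis using F unfolding lengths_def by blast
qed

lemma monoid_elasticity_eq_one_if_atoms_subset_singleton:
  assumes "atomic_monoid M" "atoms M \<subseteq> {a}" "M - {0} \<noteq> {}"
  shows "monoid_elasticity M = 1"
proof -
  have "elasticity M x = 1" if x: "x \<in> M - {0}" for x
  proof -
    obtain F where F: "F \<in> factorizations M x"
      using assms(1) x unfolding atomic_monoid_def by blast
    have L: "lengths M x = {size F}"
      by (rule lengths_eq_if_atoms_subset_singleton[OF assms(2) F])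
    then have "F \<noteq> {#}" using lengths_ge_one x by fastforce
    then show ?thesis using x by (simp add: elasticity_def L)
  qed
  then show ?thesis
    unfolding monoid_elasticity_def using assms(3) by (simp add: SUP_cong)
qed

lemma atoms_Sr_subset_one:
  assumes "r \<in> \<nat>"
  shows "atoms (Sr r) \<subseteq> {1}"
proof
  fix a assume a: "a \<in> atoms (Sr r)"
  then have "a \<in> \<nat>" "a \<noteq> 0" using Sr_subset_Nats[OF assms] by (auto simp: atoms_def)
  then obtain m where m: "a = 1 + of_nat m"
    by (metis Nats_cases add.commute not0_implies_Suc of_nat_0 of_nat_Suc)
  moreover have "of_nat m \<in> Sr r" using of_nat_mult_power_in_Sr[of m r 0] by simp
  ultimately have "of_nat m = (0::rat)"
    using atoms_trivial_split[OF a one_in_Sr] by force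
  then show "a \<in> {1}" using m by simp
qed

lemma atoms_Sr_unit_fraction:
  assumes r: "r = 1 / of_nat d" and "d > 1"
  shows "atoms (Sr r) = {}"
proof (rule ccontr)
  assume "atoms (Sr r) \<noteq> {}"
  then obtain y where y: "y \<in> atoms (Sr r)" by blast
  then have "y \<in> Sr r" "y \<noteq> 0" by (auto simp: atoms_def)
  then obtain x n where x: "x \<in> Sr r" and y_eq: "y = x + r ^ n"
    by (cases rule: Sr.cases) auto
  obtain e where d: "d = Suc e" and "e > 0" using \<open>d > 1\<close> by (cases d) auto
  have "r ^ n = of_nat d * r ^ Suc n" using assms by (simp add: r)
  also have "\<dots> = of_nat e * r ^ Suc n + r ^ Suc n" by (simp add: d algebra_simps)
  finally have "y = (x + of_nat e * r ^ Suc n) + r ^ Suc n"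
    by (simp add: y_eq add.assoc)
  moreover have "x + of_nat e * r ^ Suc n \<in> Sr r"
    using x by (intro Sr_add of_nat_mult_power_in_Sr)
  moreover have "x + of_nat e * r ^ Suc n \<noteq> 0" "r ^ Suc n \<noteq> 0"
    using Sr_nonneg[OF x] assms \<open>e > 0\<close> by (auto simp: r add_nonneg_eq_0_iff)
  ultimately show False using y power_in_Sr[of r "Suc n"] unfolding atoms_def by blast
qed

lemma not_atomic_Sr_unit_fraction:
  assumes "r = 1 / of_nat d" and "d > 1"
  shows "\<not> atomic_monoid (Sr r)"
  using one_in_Sr[of r] atoms_Sr_unit_fraction[OF assms]
  by (auto simp: atomic_monoid_def factorizations_def intro!: bexI[of _ 1])

text \<open>For \<open>r > 1\<close>, an element of \<open>S\<^sub>r\<close> below \<open>r\<^sup>k\<close> is a sum of powers \<open>r\<^sup>n\<close> with \<open>n < k\<close>.\<close>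

lemma Sr_below_power_denominator_multiple:
  fixes a d :: nat
  assumes r: "r = of_nat a / of_nat d" and "d > 0" "r > 1"
  shows "x \<in> Sr r \<Longrightarrow> x < r ^ k \<Longrightarrow> \<exists>z::nat. x * of_nat d ^ k = of_nat d * of_nat z"
proof (induction rule: Sr.induct)
  case (gen x n)
  have "x \<ge> 0" "r ^ n > 0" using gen.hyps Sr_nonneg assms by auto
  then have "r ^ n < r ^ k" and "x < r ^ k" using gen.prems by linarith+
  then obtain z where z: "x * of_nat d ^ k = of_nat d * of_nat z" using gen.IH by blast
  have "n < k" using \<open>r ^ n < r ^ k\<close> \<open>r > 1\<close> power_less_imp_less_exp by blast
  then obtain j where k: "k = n + Suc j" by (auto simp: less_iff_Suc_add)
  have "r ^ n * of_nat d ^ k = of_nat d * of_nat (a ^ n * d ^ j)"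
    using \<open>d > 0\<close> by (simp add: r k power_add power_divide)
  then show ?case
    using z by (intro exI[of _ "z + a ^ n * d ^ j"]) (simp add: algebra_simps)
qed simp

text \<open>For \<open>r < 1\<close>, an element of \<open>S\<^sub>r\<close> below \<open>r\<^sup>k\<close> is a sum of powers \<open>r\<^sup>n\<close> with \<open>n > k\<close>.\<close>

lemma Sr_below_power_numerator_multiple:
  fixes a d :: nat
  assumes r: "r = of_nat a / of_nat d" and "d > 0" "0 < r" "r < 1"
  shows "x \<in> Sr r \<Longrightarrow> x < r ^ k \<Longrightarrow>
    eventually (\<lambda>N. \<exists>z::nat. x * of_nat d ^ N = of_nat a ^ Suc k * of_nat z) sequentially"
proof (induction rule: Sr.induct)
  case (gen x n)
  have "x \<ge> 0" "r ^ n > 0" using gen.hyps Sr_nonneg assms by auto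
  then have "r ^ n < r ^ k" and "x < r ^ k" using gen.prems by linarith+
  have "k < n" using \<open>r ^ n < r ^ k\<close> power_strict_decreasing_iff assms by blast
  then obtain j where n: "n = Suc k + j" by (auto simp: less_iff_Suc_add)
  have "\<exists>z::nat. r ^ n * of_nat d ^ N = of_nat a ^ Suc k * of_nat z" if "N \<ge> n" for N
  proof -
    obtain i where N: "N = n + i" using \<open>N \<ge> n\<close> le_Suc_ex by blast
    have "r ^ n * of_nat d ^ N = of_nat a ^ n * of_nat d ^ i"
      using \<open>d > 0\<close> by (simp add: r N power_add power_divide)
    also have "\<dots> = of_nat a ^ Suc k * of_nat (a ^ j * d ^ i)" by (simp add: n power_add)
    finally show ?thesis ..
  qed
  then have "eventually (\<lambda>N. \<exists>z::nat. r ^ n * of_nat d ^ N = of_nat a ^ Suc k * of_nat z)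
      sequentially"
    unfolding eventually_sequentially by blast
  with gen.IH[OF \<open>x < r ^ k\<close>] show ?case
    by eventually_elim (metis distrib_left distrib_right of_nat_add)
qed simp

lemma power_split_Sr_gt_one_dvd:
  fixes a d :: nat
  assumes r: "r = of_nat a / of_nat d" and "d > 0" "r > 1"
    and b: "b \<in> Sr r" "b < r ^ k" and c: "c \<in> Sr r" "c < r ^ k" and split: "r ^ k = b + c"
  shows "d dvd a ^ k"
proof -
  obtain zb zc :: nat where "b * of_nat d ^ k = of_nat d * of_nat zb"
    "c * of_nat d ^ k = of_nat d * of_nat zc"
    using Sr_below_power_denominator_multiple[OF r \<open>d > 0\<close> \<open>r > 1\<close>] b c by metis
  moreover have "r ^ k * of_nat d ^ k = of_nat a ^ k" using \<open>d > 0\<close> by (simp add: r power_divide)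
  ultimately have "(of_nat (a ^ k) :: rat) = of_nat (d * (zb + zc))"
    using split by (simp add: distrib_right distrib_left)
  then show "d dvd a ^ k" by (metis dvd_triv_left of_nat_eq_iff)
qed

lemma power_split_Sr_lt_one_dvd:
  fixes a d :: nat
  assumes r: "r = of_nat a / of_nat d" and "a > 0" "d > 0" "r < 1"
    and b: "b \<in> Sr r" "b < r ^ k" and c: "c \<in> Sr r" "c < r ^ k" and split: "r ^ k = b + c"
  shows "\<exists>N. a dvd d ^ N"
proof -
  have "r > 0" using assms by (simp add: r)
  have "eventually (\<lambda>N. (\<exists>zb::nat. b * of_nat d ^ N = of_nat a ^ Suc k * of_nat zb)
      \<and> (\<exists>zc::nat. c * of_nat d ^ N = of_nat a ^ Suc k * of_nat zc)) sequentially"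
    by (intro eventually_conj Sr_below_power_numerator_multiple[OF r \<open>d > 0\<close> \<open>r > 0\<close> \<open>r < 1\<close>]
        b c)
  then obtain N zb zc :: nat where "N \<ge> k"
    "b * of_nat d ^ N = of_nat a ^ Suc k * of_nat zb"
    "c * of_nat d ^ N = of_nat a ^ Suc k * of_nat zc"
    unfolding eventually_sequentially by (metis nle_le max.cobounded1 max.cobounded2)
  moreover have "r ^ k * of_nat d ^ N = of_nat a ^ k * of_nat d ^ (N - k)"
    using \<open>d > 0\<close> \<open>N \<ge> k\<close> by (simp add: r power_divide power_diff)
  ultimately have "(of_nat (a ^ k * d ^ (N - k)) :: rat) = of_nat (a ^ k * (a * (zb + zc)))"
    using split by (simp add: algebra_simps)
  then have "d ^ (N - k) = a * (zb + zc)" using \<open>a > 0\<close> by (simp only: of_nat_eq_iff) simp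
  then show ?thesis by (metis dvd_triv_left)
qed

lemma power_in_atoms_Sr:
  fixes a d :: nat
  assumes r: "r = of_nat a / of_nat d" and "a > 1" "d > 1" "coprime a d"
  shows "r ^ k \<in> atoms (Sr r)"
proof -
  have "r > 0" "r \<noteq> 1" using assms by (auto simp: r)
  have False if b: "b \<in> Sr r" "b \<noteq> 0" and c: "c \<in> Sr r" "c \<noteq> 0" and split: "r ^ k = b + c"
    for b c
  proof -
    have "b < r ^ k" "c < r ^ k"
      using Sr_nonneg[OF b(1) \<open>r > 0\<close>] Sr_nonneg[OF c(1) \<open>r > 0\<close>] b(2) c(2) split by auto
    consider "r > 1" | "r < 1" using \<open>r \<noteq> 1\<close> by linarith
    then show False
    proof cases
      case 1
      then have "d dvd a ^ k"
        using power_split_Sr_gt_one_dvd[OF r _ 1 b(1) \<open>b < r ^ k\<close> c(1) \<open>c < r ^ k\<close> split]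
          \<open>d > 1\<close> by simp
      then show False
        using coprime_dvd_power_eq_one[of d a k] \<open>coprime a d\<close> \<open>d > 1\<close>
        by (simp add: coprime_commute)
    next
      case 2
      then obtain N where "a dvd d ^ N"
        using power_split_Sr_lt_one_dvd[OF r _ _ 2 b(1) \<open>b < r ^ k\<close> c(1) \<open>c < r ^ k\<close> split]
          \<open>a > 1\<close> \<open>d > 1\<close> by auto
      then show False using coprime_dvd_power_eq_one \<open>coprime a d\<close> \<open>a > 1\<close> by fastforce
    qed
  qed
  then show ?thesis
    using power_in_Sr[of r k] \<open>r > 0\<close> unfolding atoms_def by auto
qed

lemma monoid_elasticity_Sr_Nats:
  assumes "r \<in> \<nat>" "atomic_monoid (Sr r)"
  shows "monoid_elasticity (Sr r) = 1"
proof (rule monoid_elasticity_eq_one_if_atoms_subset_singleton)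
  show "Sr r - {0} \<noteq> {}" using one_in_Sr[of r] by force
qed (use assms atoms_Sr_subset_one in auto)

lemma monoid_elasticity_Sr_non_integer:
  fixes a d :: nat
  assumes r: "r = of_nat a / of_nat d" and "a > 1" "d > 1" "coprime a d"
  shows "monoid_elasticity (Sr r) = \<infinity>"
proof (rule ereal_top)
  fix B :: real
  have lengths: "monoid_elasticity (Sr r) \<ge> ereal (real (a ^ k) / real (d ^ k))"
    "monoid_elasticity (Sr r) \<ge> ereal (real (d ^ k) / real (a ^ k))" for k
  proof -
    let ?x = "of_nat (a ^ k) :: rat"
    have "of_nat (a ^ k) * 1 = ?x" "of_nat (d ^ k) * r ^ k = ?x"
      using assms by (simp_all add: r power_divide)
    then have "replicate_mset (a ^ k) 1 \<in> factorizations (Sr r) ?x"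
      "replicate_mset (d ^ k) (r ^ k) \<in> factorizations (Sr r) ?x"
      using power_in_atoms_Sr[OF assms, of 0] power_in_atoms_Sr[OF assms, of k]
      by (auto intro: replicate_in_factorizations)
    then have la: "a ^ k \<in> lengths (Sr r) ?x" and ld: "d ^ k \<in> lengths (Sr r) ?x"
      by (metis size_in_lengths size_replicate_mset)+
    have "?x \<in> Sr r" "?x \<noteq> 0"
      using of_nat_mult_power_in_Sr[of "a ^ k" r 0] \<open>a > 1\<close> by simp_all
    from monoid_elasticity_ge_length_ratio[OF this la ld]
      monoid_elasticity_ge_length_ratio[OF this ld la]
    show "monoid_elasticity (Sr r) \<ge> ereal (real (a ^ k) / real (d ^ k))"
      "monoid_elasticity (Sr r) \<ge> ereal (real (d ^ k) / real (a ^ k))" .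
  qed
  have "a \<noteq> d" using \<open>coprime a d\<close> \<open>a > 1\<close> by auto
  then consider "real a / real d > 1" | "real d / real a > 1" using assms by fastforce
  then obtain k where "B < real (a ^ k) / real (d ^ k) \<or> B < real (d ^ k) / real (a ^ k)"
    by cases (metis real_arch_pow power_divide of_nat_power)+
  then show "ereal B \<le> monoid_elasticity (Sr r)"
    using lengths[of k] by (meson ereal_less_eq(3) less_imp_le order_trans)
qed

lemma monoid_elasticity_Sr:
  assumes "r > 0" "atomic_monoid (Sr r)"
  shows "monoid_elasticity (Sr r) = (if r \<in> \<nat> then 1 else \<infinity>)"
proof -
  obtain a d :: nat where "a > 0" "d > 0" "coprime a d" and r: "r = of_nat a / of_nat d"
    using rat_eq_coprime_nat_fraction[OF assms(1)] .
  consider "d = 1" | "a = 1" "d > 1" | "a > 1" "d > 1"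
    using \<open>a > 0\<close> \<open>d > 0\<close> by linarith
  then show ?thesis
  proof cases
    case 1
    then show ?thesis using monoid_elasticity_Sr_Nats assms by (simp add: r)
  next
    case 2
    then show ?thesis using not_atomic_Sr_unit_fraction assms(2) r by simp
  next
    case 3
    have "r \<notin> \<nat>"
    proof
      assume "r \<in> \<nat>"
      then obtain m where "r = of_nat m" by (auto elim: Nats_cases)
      then have "of_nat a = (of_nat (m * d) :: rat)" using 3 by (simp add: r field_simps)
      then have "d dvd a ^ 1" by (metis dvd_triv_right of_nat_eq_iff power_one_right)
      then show False
        using coprime_dvd_power_eq_one[of d a 1] \<open>coprime a d\<close> 3 by (simp add: coprime_commute)
    qed
    then show ?thesis using monoid_elasticity_Sr_non_integer[OF r 3(1,2) \<open>coprime a d\<close>] by simp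
  qed
qed

theorem corollary4p2:
  fixes r :: rat
  assumes "r > 0" and "atomic_monoid (Sr r)"
  shows "(r \<in> \<nat> \<longleftrightarrow> monoid_elasticity (Sr r) = 1)
    \<and> (monoid_elasticity (Sr r) = 1 \<longleftrightarrow> monoid_elasticity (Sr r) < \<infinity>)
    \<and> monoid_elasticity (Sr r) \<in> {1, \<infinity>}"
  using monoid_elasticity_Sr[OF assms] by simp

end
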